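(* Let $n \geq 3$ be an integer and let $\ell$ be an odd positive integer. Then the quotient group $B_n[\ell]/B_n[2\ell]$ is isomorphic to the symmetric group $S_n$. (Here $B_n[2\ell]$ is a normal subgroup of $B_n[\ell]$, being the kernel of the reduction-mod-$2\ell$ Burau map restricted to $B_n[\ell]$.)
   Context: $B_n$ denotes the braid group on $n$ strands with standard Artin generators $\sigma_1,\dots,\sigma_{n-1}$. The reduced integral Burau representation $\rho_{-1}: B_n \to GL(n-1,\mathbb{Z})$ is defined on generators by $\rho_{-1}(\sigma_1)=\begin{pmatrix}1&0\\1&1\end{pmatrix}\oplus \mathrm{Id}_{n-3}$, $\rho_{-1}(\sigma_{n-1})=\mathrm{Id}_{n-3}\oplus\begin{pmatrix}1&-1\\0&1\end{pmatrix}$, and for $1<i<n-1$, $\rho_{-1}(\sigma_i)=\mathrm{Id}_{i-2}\oplus\begin{pmatrix}1&-1&0\\0&1&0\\0&1&1\end{pmatrix}\oplus \mathrm{Id}_{n-i-2}$, where $\oplus$ denotes block-diagonal sum. For a positive integer $\ell$, let $r_\ell: GL(n-1,\mathbb{Z})\to GL(n-1,\mathbb{Z}/\ell\mathbb{Z})$ be entrywise reduction mod $\ell$. The level $\ell$ congruence subgroup of the braid group is $B_n[\ell] := \ker(r_\ell\circ\rho_{-1})$. *)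

theory Defs
  imports "HOL-Algebra.Sym_Groups" "HOL-Algebra.Coset"
begin

text \<open>A braid letter (i, True) stands for sigma_i, (i, False) for sigma_i inverse.
  A word is valid in B_n if all its indices lie in 1..n-1.\<close>

type_synonym braid_word = "(nat \<times> bool) list"

definition valid_word :: "nat \<Rightarrow> braid_word \<Rightarrow> bool" where
  "valid_word n w \<longleftrightarrow> (\<forall>(i, b) \<in> set w. 1 \<le> i \<and> i \<le> n - 1)"

text \<open>Defining relator pairs (l, r), meaning l = r in B_n: free cancellation,
  far commutativity, and the braid relation.\<close>

definition braid_relators :: "nat \<Rightarrow> (braid_word \<times> braid_word) set" where
  "braid_relators n =
     {([(i, b), (i, \<not> b)], []) | i b. 1 \<le> i \<and> i \<le> n - 1}
   \<union> {([(i, True), (j, True)], [(j, True), (i, True)]) | i j.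
        1 \<le> i \<and> i \<le> n - 1 \<and> 1 \<le> j \<and> j \<le> n - 1 \<and> (i + 2 \<le> j \<or> j + 2 \<le> i)}
   \<union> {([(i, True), (Suc i, True), (i, True)], [(Suc i, True), (i, True), (Suc i, True)]) | i.
        1 \<le> i \<and> Suc i \<le> n - 1}"

inductive braid_eq :: "nat \<Rightarrow> braid_word \<Rightarrow> braid_word \<Rightarrow> bool" for n where
  refl: "valid_word n w \<Longrightarrow> braid_eq n w w"
| sym: "braid_eq n u v \<Longrightarrow> braid_eq n v u"
| trans: "braid_eq n u v \<Longrightarrow> braid_eq n v w \<Longrightarrow> braid_eq n u w"
| rel: "valid_word n u \<Longrightarrow> valid_word n v \<Longrightarrow> (l, r) \<in> braid_relators n
        \<Longrightarrow> braid_eq n (u @ l @ v) (u @ r @ v)"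

definition braid_class :: "nat \<Rightarrow> braid_word \<Rightarrow> braid_word set" where
  "braid_class n w = {v. braid_eq n w v}"

definition braid_group :: "nat \<Rightarrow> braid_word set monoid" where
  "braid_group n =
     \<lparr> carrier = {braid_class n w | w. valid_word n w},
       mult = (\<lambda>A B. braid_class n ((SOME u. u \<in> A) @ (SOME v. v \<in> B))),
       one = braid_class n [] \<rparr>"

text \<open>Integer matrices of size (n-1) x (n-1) are represented as functions
  nat => nat => int, with rows/columns indexed 0..n-2 (only those entries matter).\<close>

definition mat_mult :: "nat \<Rightarrow> (nat \<Rightarrow> nat \<Rightarrow> int) \<Rightarrow> (nat \<Rightarrow> nat \<Rightarrow> int) \<Rightarrow> (nat \<Rightarrow> nat \<Rightarrow> int)" where
  "mat_mult k A B = (\<lambda>r c. \<Sum>j<k. A r j * B j c)"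

definition mat_id :: "nat \<Rightarrow> nat \<Rightarrow> int" where
  "mat_id = (\<lambda>r c. if r = c then 1 else 0)"

text \<open>rho(sigma_i) as in the paper (0-based indices): the block
  [[1,0],[1,1]] at rows/cols 0,1 for i = 1; the block [[1,-1],[0,1]] at rows/cols n-3,n-2
  for i = n-1; the block [[1,-1,0],[0,1,0],[0,1,1]] at rows/cols i-2,i-1,i otherwise.
  Since the nilpotent part squares to zero, rho(sigma_i^-1) = Id - (that part).\<close>

definition burau_gen :: "nat \<Rightarrow> nat \<Rightarrow> bool \<Rightarrow> (nat \<Rightarrow> nat \<Rightarrow> int)" where
  "burau_gen n i b = (\<lambda>r c. mat_id r c +
      (if b then 1 else -1) *
        ((if r = i \<and> c = i - 1 \<and> i \<le> n - 2 then 1 else 0)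
         - (if 2 \<le> i \<and> r = i - 2 \<and> c = i - 1 then 1 else 0)))"

definition burau :: "nat \<Rightarrow> braid_word \<Rightarrow> (nat \<Rightarrow> nat \<Rightarrow> int)" where
  "burau n w = foldr (\<lambda>(i, b) M. mat_mult (n - 1) (burau_gen n i b) M) w mat_id"

definition congruence_subgroup :: "nat \<Rightarrow> nat \<Rightarrow> braid_word set set" where
  "congruence_subgroup n l =
     {A \<in> carrier (braid_group n). \<forall>w \<in> A. \<forall>r < n - 1. \<forall>c < n - 1.
        burau n w r c mod int l = mat_id r c mod int l}"

end

theory Submission
  imports Defs "HOL-Number_Theory.Cong"
begin

text \<open>
  Modulo 2 the Burau matrix of a braid only depends on its permutation, and for \<open>n \<ge> 3\<close> it
  determines that permutation; so \<open>B\<^sub>n[2]\<close> is the kernel of the permutation map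
  \<open>B\<^sub>n \<rightarrow> S\<^sub>n\<close>. As \<open>l\<close> is odd, \<open>B\<^sub>n[2l] = B\<^sub>n[l] \<inter> B\<^sub>n[2]\<close> by the Chinese remainder theorem,
  which is the kernel of the permutation map restricted to \<open>B\<^sub>n[l]\<close>. This restriction is onto:
  \<open>\<rho>(\<sigma>\<^sub>i)\<close> is the identity plus a square-zero matrix, so \<open>\<sigma>\<^sub>i\<^sup>l \<in> B\<^sub>n[l]\<close>, and it maps to the odd
  power \<open>(i i+1)\<^sup>l = (i i+1)\<close>; adjacent transpositions generate \<open>S\<^sub>n\<close>. The first isomorphism
  theorem concludes.
\<close>

lemma valid_word_Nil [simp]: "valid_word n []"
  by (simp add: valid_word_def)

lemma valid_word_Cons [simp]:
  "valid_word n (x # w) \<longleftrightarrow> 1 \<le> fst x \<and> fst x \<le> n - 1 \<and> valid_word n w"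
  by (cases x) (auto simp: valid_word_def)

lemma valid_word_append [simp]: "valid_word n (u @ v) \<longleftrightarrow> valid_word n u \<and> valid_word n v"
  by (auto simp: valid_word_def)

lemma braid_relators_valid: "(l, r) \<in> braid_relators n \<Longrightarrow> valid_word n l \<and> valid_word n r"
  by (auto simp: braid_relators_def)

lemma braid_eq_valid: "braid_eq n u v \<Longrightarrow> valid_word n u \<and> valid_word n v"
  by (induction rule: braid_eq.induct) (auto dest: braid_relators_valid)

lemma braid_eq_append_right: "braid_eq n u u' \<Longrightarrow> valid_word n v \<Longrightarrow> braid_eq n (u @ v) (u' @ v)"
proof (induction rule: braid_eq.induct)
  case (rel u w l r)
  then show ?case using braid_eq.rel[of n u "w @ v" l r] by simp
qed (auto intro: braid_eq.intros)

lemma braid_eq_append_left: "braid_eq n u u' \<Longrightarrow> valid_word n v \<Longrightarrow> braid_eq n (v @ u) (v @ u')"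
proof (induction rule: braid_eq.induct)
  case (rel u w l r)
  then show ?case using braid_eq.rel[of n "v @ u" w l r] by simp
qed (auto intro: braid_eq.intros)

lemma braid_eq_append: "braid_eq n u u' \<Longrightarrow> braid_eq n v v' \<Longrightarrow> braid_eq n (u @ v) (u' @ v')"
  by (meson braid_eq.trans braid_eq_append_left braid_eq_append_right braid_eq_valid)

lemma mem_braid_class: "w \<in> braid_class n u \<longleftrightarrow> braid_eq n u w"
  by (simp add: braid_class_def)

lemma braid_class_eq_iff: "valid_word n u \<Longrightarrow> braid_class n u = braid_class n v \<longleftrightarrow> braid_eq n u v"
  unfolding braid_class_def by (auto intro: braid_eq.intros)

lemma braid_eq_some_mem_braid_class: "valid_word n w \<Longrightarrow> braid_eq n w (SOME u. u \<in> braid_class n w)"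
  by (metis braid_eq.refl mem_braid_class someI)

lemma braid_group_carrier: "A \<in> carrier (braid_group n) \<longleftrightarrow> (\<exists>w. valid_word n w \<and> A = braid_class n w)"
  by (auto simp: braid_group_def)

lemma braid_class_in_carrier: "valid_word n w \<Longrightarrow> braid_class n w \<in> carrier (braid_group n)"
  by (auto simp: braid_group_carrier)

lemma braid_group_one: "\<one>\<^bsub>braid_group n\<^esub> = braid_class n []"
  by (simp add: braid_group_def)

lemma braid_group_mult:
  "valid_word n u \<Longrightarrow> valid_word n v \<Longrightarrow>
     braid_class n u \<otimes>\<^bsub>braid_group n\<^esub> braid_class n v = braid_class n (u @ v)"
  unfolding braid_group_def
  by simp (metis braid_eq.sym braid_eq_append braid_eq_valid braid_class_eq_iff
      braid_eq_some_mem_braid_class)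

definition inv_word :: "braid_word \<Rightarrow> braid_word" where
  "inv_word w = rev (map (\<lambda>(i, b). (i, \<not> b)) w)"

lemma valid_word_inv_word [simp]: "valid_word n (inv_word w) \<longleftrightarrow> valid_word n w"
  by (auto simp: valid_word_def inv_word_def)

lemma braid_eq_inv_word_append: "valid_word n w \<Longrightarrow> braid_eq n (inv_word w @ w) []"
proof (induction w)
  case Nil
  then show ?case by (simp add: inv_word_def braid_eq.refl)
next
  case (Cons x w)
  obtain i b where x: "x = (i, b)" by force
  have "([(i, \<not> b), (i, b)], []) \<in> braid_relators n"
    using Cons.prems x unfolding braid_relators_def by force
  then have "braid_eq n (inv_word w @ [(i, \<not> b), (i, b)] @ w) (inv_word w @ [] @ w)"
    using Cons.prems by (intro braid_eq.rel) simp_all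
  with Cons x show ?case by (simp add: inv_word_def) (meson braid_eq.trans)
qed

lemma group_braid_group: "group (braid_group n)"
proof (rule groupI)
  fix x y assume "x \<in> carrier (braid_group n)" "y \<in> carrier (braid_group n)"
  then show "x \<otimes>\<^bsub>braid_group n\<^esub> y \<in> carrier (braid_group n)"
    by (auto simp: braid_group_carrier braid_group_mult simp del: valid_word_append)
      (metis valid_word_append)
next
  show "\<one>\<^bsub>braid_group n\<^esub> \<in> carrier (braid_group n)"
    by (simp add: braid_group_one braid_class_in_carrier)
next
  fix x assume "x \<in> carrier (braid_group n)"
  then obtain w where w: "valid_word n w" "x = braid_class n w" by (auto simp: braid_group_carrier)
  show "\<exists>y\<in>carrier (braid_group n). y \<otimes>\<^bsub>braid_group n\<^esub> x = \<one>\<^bsub>braid_group n\<^esub>"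
  proof
    show "braid_class n (inv_word w) \<otimes>\<^bsub>braid_group n\<^esub> x = \<one>\<^bsub>braid_group n\<^esub>"
      using w braid_eq_inv_word_append[OF w(1)]
      by (simp add: braid_group_mult braid_group_one braid_class_eq_iff)
  qed (simp add: w braid_class_in_carrier)
qed (auto simp: braid_group_carrier braid_group_mult braid_group_one)

lemma braid_group_inv:
  "valid_word n w \<Longrightarrow> inv\<^bsub>braid_group n\<^esub> braid_class n w = braid_class n (inv_word w)"
  by (intro group.inv_equality group_braid_group)
    (simp_all add: braid_class_in_carrier braid_group_mult braid_group_one braid_class_eq_iff
      braid_eq_inv_word_append)

definition word_action :: "(nat \<Rightarrow> bool \<Rightarrow> 'a \<Rightarrow> 'a) \<Rightarrow> braid_word \<Rightarrow> 'a \<Rightarrow> 'a" where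
  "word_action g w = foldr (\<lambda>(i, b) f. g i b \<circ> f) w id"

lemma word_action_Nil [simp]: "word_action g [] = id"
  by (simp add: word_action_def)

lemma word_action_Cons [simp]: "word_action g ((i, b) # w) = g i b \<circ> word_action g w"
  by (simp add: word_action_def)

lemma word_action_append: "word_action g (u @ v) = word_action g u \<circ> word_action g v"
  by (induction u) (auto simp: word_action_def)

lemma braid_eq_word_action:
  assumes "\<And>l r. (l, r) \<in> braid_relators n \<Longrightarrow> word_action g l = word_action g r"
  shows "braid_eq n u v \<Longrightarrow> word_action g u = word_action g v"
  by (induction rule: braid_eq.induct) (auto simp: word_action_append assms)

definition braid_perm :: "braid_word \<Rightarrow> nat \<Rightarrow> nat" where
  "braid_perm = word_action (\<lambda>i _. Transposition.transpose i (Suc i))"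

lemma braid_perm_Nil: "braid_perm [] = id"
  by (simp add: braid_perm_def)

lemma braid_perm_Cons: "braid_perm ((i, b) # w) = Transposition.transpose i (Suc i) \<circ> braid_perm w"
  by (simp add: braid_perm_def)

lemma braid_perm_append: "braid_perm (u @ v) = braid_perm u \<circ> braid_perm v"
  by (simp add: braid_perm_def word_action_append)

lemma braid_perm_braid_eq: "braid_eq n u v \<Longrightarrow> braid_perm u = braid_perm v"
  unfolding braid_perm_def
  by (rule braid_eq_word_action) (auto simp: braid_relators_def fun_eq_iff transpose_def)

lemma braid_perm_permutes: "valid_word n w \<Longrightarrow> braid_perm w permutes {1..n}"
proof (induction w)
  case (Cons x w)
  obtain i b where x: "x = (i, b)" by force
  have "braid_perm w permutes {1..n}"
    using Cons x by simp
  moreover have "Transposition.transpose i (Suc i) permutes {1..n}"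
    using Cons.prems x by (intro permutes_swap_id) auto
  ultimately show ?case
    unfolding x braid_perm_Cons by (rule permutes_compose)
qed (simp add: braid_perm_Nil permutes_id)

lemma braid_perm_replicate:
  "braid_perm (replicate k (i, b)) = (if even k then id else Transposition.transpose i (Suc i))"
  by (induction k) (auto simp: braid_perm_def fun_eq_iff)

section \<open>Burau matrices as column actions\<close>

definition burau_coeff :: "nat \<Rightarrow> nat \<Rightarrow> bool \<Rightarrow> nat \<Rightarrow> int" where
  "burau_coeff n i b r = (if b then 1 else -1) *
     ((if r = i \<and> i \<le> n - 2 then 1 else 0) - (if 2 \<le> i \<and> r = i - 2 then 1 else 0))"

lemma burau_gen_eq:
  "burau_gen n i b r j = mat_id r j + (if j = i - 1 then burau_coeff n i b r else 0)"
  by (auto simp: burau_gen_def mat_id_def burau_coeff_def)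

definition burau_act :: "nat \<Rightarrow> nat \<Rightarrow> bool \<Rightarrow> (nat \<Rightarrow> int) \<Rightarrow> nat \<Rightarrow> int" where
  "burau_act n i b v = (\<lambda>r. v r + burau_coeff n i b r * v (i - 1))"

lemma sum_mat_id_left: "(\<Sum>j<k. mat_id r j * f j) = (if r < k then f r else 0)"
proof -
  have "(\<Sum>j<k. mat_id r j * f j) = (\<Sum>j<k. if j = r then f j else 0)"
    by (rule sum.cong) (auto simp: mat_id_def)
  then show ?thesis by simp
qed

lemma sum_mat_id_right: "(\<Sum>j<k. f j * mat_id j c) = (if c < k then f c else 0)"
  using sum_mat_id_left[where k = k and r = c and f = f] by (simp add: mat_id_def mult.commute eq_commute)

lemma burau_Nil [simp]: "burau n [] = mat_id"
  by (simp add: burau_def)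

lemma burau_Cons:
  assumes "r < n - 1" and "1 \<le> i" and "i \<le> n - 1"
  shows "burau n ((i, b) # w) r c = burau n w r c + burau_coeff n i b r * burau n w (i - 1) c"
proof -
  have "burau n ((i, b) # w) r c = (\<Sum>j<n - 1. burau_gen n i b r j * burau n w j c)"
    by (simp add: burau_def mat_mult_def)
  also have "\<dots> = (\<Sum>j<n - 1. mat_id r j * burau n w j c
      + (if j = i - 1 then burau_coeff n i b r * burau n w j c else 0))"
    by (rule sum.cong) (simp_all add: burau_gen_eq ring_distribs)
  also have "\<dots> = burau n w r c + burau_coeff n i b r * burau n w (i - 1) c"
    using assms by (simp add: sum.distrib sum_mat_id_left)
  finally show ?thesis .
qed

lemma burau_eq_word_action:
  "valid_word n w \<Longrightarrow> r < n - 1 \<Longrightarrow> burau n w r c = word_action (burau_act n) w (\<lambda>j. mat_id j c) r"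
proof (induction w arbitrary: r)
  case (Cons x w)
  then show ?case
    by (cases x) (auto simp: burau_Cons burau_act_def)
qed simp

lemma burau_coeff_neg: "burau_coeff n i (\<not> b) r = - burau_coeff n i b r"
  by (simp add: burau_coeff_def)

lemma burau_coeff_diag: "burau_coeff n (Suc k) b k = 0"
  by (auto simp: burau_coeff_def)

lemma burau_coeff_far: "2 \<le> j - Suc k \<or> 2 \<le> Suc k - j \<Longrightarrow> burau_coeff n j b k = 0"
  by (auto simp: burau_coeff_def)

lemma word_action_burau_act_relators:
  assumes "(l, r) \<in> braid_relators n"
  shows "word_action (burau_act n) l = word_action (burau_act n) r"
proof -
  from assms consider
      (cancel) k b where "l = [(Suc k, b), (Suc k, \<not> b)]" "r = []"
    | (far) i j where "l = [(Suc i, True), (Suc j, True)]" "r = [(Suc j, True), (Suc i, True)]"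
        "i + 2 \<le> j \<or> j + 2 \<le> i"
    | (braid) k where "l = [(Suc k, True), (Suc (Suc k), True), (Suc k, True)]"
        "r = [(Suc (Suc k), True), (Suc k, True), (Suc (Suc k), True)]" "Suc (Suc k) \<le> n - 1"
    unfolding braid_relators_def by (auto simp: Suc_le_eq dest!: gr0_implies_Suc)
  then show ?thesis
  proof cases
    case cancel
    then show ?thesis by (simp add: burau_act_def fun_eq_iff burau_coeff_neg burau_coeff_diag)
  next
    case far
    then have "burau_coeff n (Suc j) True i = 0" "burau_coeff n (Suc i) True j = 0"
      by (auto intro: burau_coeff_far)
    with far show ?thesis by (simp add: burau_act_def fun_eq_iff algebra_simps)
  next
    case braid
    then have "burau_coeff n (Suc k) True (Suc k) = 1" "burau_coeff n (Suc (Suc k)) True k = -1"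
      "burau_coeff n (Suc (Suc k)) True (Suc k) = 0"
      by (auto simp: burau_coeff_def)
    with braid show ?thesis
      by (simp add: burau_act_def fun_eq_iff burau_coeff_diag algebra_simps)
  qed
qed

lemma burau_braid_eq:
  assumes "braid_eq n u v" and "r < n - 1"
  shows "burau n u r c = burau n v r c"
proof -
  have "word_action (burau_act n) u = word_action (burau_act n) v"
    by (intro braid_eq_word_action[OF _ assms(1)] word_action_burau_act_relators)
  with assms braid_eq_valid[OF assms(1)] show ?thesis
    by (simp add: burau_eq_word_action)
qed

lemma burau_append:
  assumes "valid_word n u" and "valid_word n v" and "r < n - 1"
  shows "burau n (u @ v) r c = (\<Sum>j<n - 1. burau n u r j * burau n v j c)"
  using assms
proof (induction u arbitrary: r)
  case Nil
  then show ?case by (simp add: sum_mat_id_left)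
next
  case (Cons x u)
  obtain i b where x: "x = (i, b)" by force
  with Cons.prems have i: "1 \<le> i" "i \<le> n - 1" "i - 1 < n - 1" by auto
  have "burau n ((i, b) # u @ v) r c
      = burau n (u @ v) r c + burau_coeff n i b r * burau n (u @ v) (i - 1) c"
    using Cons.prems i by (simp add: burau_Cons)
  also have "\<dots> = (\<Sum>j<n - 1. burau n u r j * burau n v j c)
      + burau_coeff n i b r * (\<Sum>j<n - 1. burau n u (i - 1) j * burau n v j c)"
    using Cons x i by simp
  also have "\<dots> = (\<Sum>j<n - 1. burau n ((i, b) # u) r j * burau n v j c)"
    using Cons.prems i
    by (simp add: burau_Cons sum.distrib sum_distrib_left ring_distribs mult.assoc)
  finally show ?case
    using x by simp
qed

definition congruent_id :: "nat \<Rightarrow> nat \<Rightarrow> (nat \<Rightarrow> nat \<Rightarrow> int) \<Rightarrow> bool" where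
  "congruent_id n m M \<longleftrightarrow> (\<forall>r<n - 1. \<forall>c<n - 1. [M r c = mat_id r c] (mod int m))"

lemma braid_class_mem_congruence_subgroup:
  assumes "valid_word n w"
  shows "braid_class n w \<in> congruence_subgroup n m \<longleftrightarrow> congruent_id n m (burau n w)"
proof
  assume "braid_class n w \<in> congruence_subgroup n m"
  moreover have "w \<in> braid_class n w"
    using assms by (simp add: mem_braid_class braid_eq.refl)
  ultimately show "congruent_id n m (burau n w)"
    by (simp add: congruence_subgroup_def congruent_id_def cong_def)
next
  assume w: "congruent_id n m (burau n w)"
  have "burau n v r c mod int m = mat_id r c mod int m"
    if "v \<in> braid_class n w" "r < n - 1" "c < n - 1" for v r c
    using that w burau_braid_eq[of n w v r c, symmetric] by (simp add: mem_braid_class congruent_id_def cong_def)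
  then show "braid_class n w \<in> congruence_subgroup n m"
    by (simp add: congruence_subgroup_def braid_class_in_carrier assms)
qed

lemma congruence_subgroupE:
  assumes "A \<in> congruence_subgroup n m"
  obtains w where "valid_word n w" "A = braid_class n w" "congruent_id n m (burau n w)"
proof -
  from assms obtain w where "valid_word n w" "A = braid_class n w"
    by (auto simp: congruence_subgroup_def braid_group_carrier)
  with assms show thesis
    using that braid_class_mem_congruence_subgroup by blast
qed

lemma burau_append_cong_left:
  assumes "valid_word n u" and "valid_word n v" and "congruent_id n m (burau n v)"
    and "r < n - 1" and "c < n - 1"
  shows "[burau n (u @ v) r c = burau n u r c] (mod int m)"
proof -
  have "[\<Sum>j<n - 1. burau n u r j * burau n v j c = \<Sum>j<n - 1. burau n u r j * mat_id j c] (mod int m)"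
    using assms(3,5) unfolding congruent_id_def by (intro cong_sum cong_mult cong_refl) simp
  then show ?thesis
    using assms(5) by (simp add: burau_append[OF assms(1,2,4)] sum_mat_id_right)
qed

lemma congruent_id_append:
  assumes "valid_word n u" and "valid_word n v"
    and "congruent_id n m (burau n u)" and "congruent_id n m (burau n v)"
  shows "congruent_id n m (burau n (u @ v))"
  unfolding congruent_id_def
proof (intro allI impI)
  fix r c assume "r < n - 1" "c < n - 1"
  with assms show "[burau n (u @ v) r c = mat_id r c] (mod int m)"
    using burau_append_cong_left[of n u v m r c] by (auto simp: congruent_id_def intro: cong_trans)
qed

lemma congruent_id_inv_word:
  assumes "valid_word n w" and "congruent_id n m (burau n w)"
  shows "congruent_id n m (burau n (inv_word w))"
  unfolding congruent_id_def
proof (intro allI impI)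
  fix r c assume rc: "r < n - 1" "c < n - 1"
  have "burau n (inv_word w @ w) r c = mat_id r c"
    using burau_braid_eq[OF braid_eq_inv_word_append[OF assms(1)] rc(1)] by simp
  then show "[burau n (inv_word w) r c = mat_id r c] (mod int m)"
    using burau_append_cong_left[of n "inv_word w" w m r c] assms rc by (simp add: cong_sym_eq)
qed

lemma subgroup_congruence_subgroup: "subgroup (congruence_subgroup n m) (braid_group n)"
proof (rule group.subgroupI[OF group_braid_group])
  show "congruence_subgroup n m \<subseteq> carrier (braid_group n)"
    by (auto simp: congruence_subgroup_def)
  show "congruence_subgroup n m \<noteq> {}"
    using braid_class_mem_congruence_subgroup[of n "[]" m] by (auto simp: congruent_id_def)
next
  fix A assume "A \<in> congruence_subgroup n m"
  then obtain w where "valid_word n w" "A = braid_class n w" "congruent_id n m (burau n w)"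
    by (rule congruence_subgroupE)
  then show "inv\<^bsub>braid_group n\<^esub> A \<in> congruence_subgroup n m"
    by (simp add: braid_group_inv braid_class_mem_congruence_subgroup congruent_id_inv_word)
next
  fix A B assume "A \<in> congruence_subgroup n m" "B \<in> congruence_subgroup n m"
  then obtain u v where "valid_word n u" "A = braid_class n u" "congruent_id n m (burau n u)"
    and "valid_word n v" "B = braid_class n v" "congruent_id n m (burau n v)"
    by (metis congruence_subgroupE)
  then show "A \<otimes>\<^bsub>braid_group n\<^esub> B \<in> congruence_subgroup n m"
    by (simp add: braid_group_mult braid_class_mem_congruence_subgroup congruent_id_append)
qed

lemma congruence_subgroup_mult:
  assumes "coprime a b"
  shows "congruence_subgroup n (a * b) = congruence_subgroup n a \<inter> congruence_subgroup n b"
proof -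
  have "x mod int (a * b) = y mod int (a * b) \<longleftrightarrow>
      x mod int a = y mod int a \<and> x mod int b = y mod int b" for x y :: int
    using assms coprime_cong_mult[of x y "int a" "int b"]
      cong_dvd_modulus[of x y "int (a * b)" "int a"] cong_dvd_modulus[of x y "int (a * b)" "int b"]
    unfolding cong_def by auto
  then show ?thesis
    unfolding congruence_subgroup_def by blast
qed

section \<open>Reduction modulo 2\<close>

text \<open>
  Modulo 2, \<open>\<rho>\<^sub>-\<^sub>1\<close> is the action of \<open>S\<^sub>n\<close> on subsets of \<open>{1..n}\<close> modulo complements, in the
  coordinates \<open>S \<mapsto> (|S \<inter> {r+1, r+2}| mod 2)\<^sub>r\<close>; column \<open>c\<close> of the identity is the image of
  \<open>{1..c+1}\<close>.
\<close>

definition burau_parity :: "(nat \<Rightarrow> nat) \<Rightarrow> nat \<Rightarrow> nat \<Rightarrow> bool" where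
  "burau_parity p r c \<longleftrightarrow> (Suc r \<in> p ` {1..Suc c}) \<noteq> (Suc (Suc r) \<in> p ` {1..Suc c})"

lemma burau_parity_id: "burau_parity id r c \<longleftrightarrow> r = c"
  by (auto simp: burau_parity_def)

lemma burau_parity_transpose_comp:
  assumes "1 \<le> i"
  shows "burau_parity (Transposition.transpose i (Suc i) \<circ> p) r c \<longleftrightarrow>
    burau_parity p r c \<noteq> ((r = i \<or> Suc (Suc r) = i) \<and> burau_parity p (i - 1) c)"
proof -
  define S where "S = p ` {1..Suc c}"
  have "x \<in> (Transposition.transpose i (Suc i) \<circ> p) ` {1..Suc c} \<longleftrightarrow>
      Transposition.transpose i (Suc i) x \<in> S" for x
    by (simp only: S_def image_comp[symmetric] in_transpose_image_iff)
  moreover have "Suc (i - 1) = i"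
    using assms by simp
  ultimately show ?thesis
    unfolding burau_parity_def S_def[symmetric]
    by (cases "r = i \<or> Suc r = i \<or> Suc (Suc r) = i") (auto simp: transpose_def)
qed

lemma odd_burau_coeff: "r < n - 1 \<Longrightarrow> odd (burau_coeff n i b r) \<longleftrightarrow> r = i \<or> Suc (Suc r) = i"
  by (auto simp: burau_coeff_def)

lemma odd_burau:
  "valid_word n w \<Longrightarrow> r < n - 1 \<Longrightarrow> odd (burau n w r c) \<longleftrightarrow> burau_parity (braid_perm w) r c"
proof (induction w arbitrary: r)
  case Nil
  then show ?case unfolding braid_perm_Nil burau_parity_id by (simp add: mat_id_def)
next
  case (Cons x w)
  obtain i b where x: "x = (i, b)" by force
  with Cons.prems have i: "1 \<le> i" "i \<le> n - 1" "i - 1 < n - 1" "Suc (i - 1) = i" by auto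
  have "odd (burau n ((i, b) # w) r c) \<longleftrightarrow>
      odd (burau n w r c) \<noteq> (odd (burau_coeff n i b r) \<and> odd (burau n w (i - 1) c))"
    using Cons.prems i by (auto simp: burau_Cons)
  also have "\<dots> \<longleftrightarrow> burau_parity (Transposition.transpose i (Suc i) \<circ> braid_perm w) r c"
    using Cons i by (simp add: odd_burau_coeff burau_parity_transpose_comp)
  finally show ?case
    unfolding x braid_perm_Cons .
qed

lemma flip_once_predicate_iff:
  fixes P :: "nat \<Rightarrow> bool"
  assumes "1 \<le> k" and jump: "\<And>x. 1 \<le> x \<Longrightarrow> x < n \<Longrightarrow> P x \<noteq> P (Suc x) \<longleftrightarrow> x = k"
  shows "1 \<le> x \<Longrightarrow> x \<le> n \<Longrightarrow> P x \<longleftrightarrow> (P 1 \<longleftrightarrow> x \<le> k)"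
proof (induction x)
  case (Suc x)
  show ?case
  proof (cases "x = 0")
    case False
    with Suc jump[of x] show ?thesis by auto
  qed (use assms(1) in simp)
qed simp

lemma image_atLeastAtMost_if_burau_parity:
  assumes "p permutes {1..n}" and "c < n - 1"
    and parity: "\<And>r. r < n - 1 \<Longrightarrow> burau_parity p r c \<longleftrightarrow> r = c"
  shows "p ` {1..Suc c} = {1..Suc c} \<or> p ` {1..Suc c} = {Suc (Suc c)..n}"
proof -
  let ?S = "p ` {1..Suc c}"
  have step: "x \<in> ?S \<longleftrightarrow> (1 \<in> ?S \<longleftrightarrow> x \<le> Suc c)" if "1 \<le> x" "x \<le> n" for x
  proof (rule flip_once_predicate_iff[of "Suc c" n "\<lambda>x. x \<in> ?S", OF _ _ that])
    fix y assume "1 \<le> y" "y < n"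
    then show "(y \<in> ?S) \<noteq> (Suc y \<in> ?S) \<longleftrightarrow> y = Suc c"
      using parity[of "y - 1"] by (auto simp: burau_parity_def)
  qed simp
  have sub: "?S \<subseteq> {1..n}"
    using assms(2) image_mono[of "{1..Suc c}" "{1..n}" p] permutes_image[OF assms(1)] by auto
  have mem: "x \<in> ?S \<longleftrightarrow> x \<in> (if 1 \<in> ?S then {1..Suc c} else {Suc (Suc c)..n})" for x
    using step[of x] subsetD[OF sub, of x] assms(2) by (cases "1 \<le> x \<and> x \<le> n") auto
  from Set.set_eqI[OF mem] show ?thesis
    by (metis (full_types))
qed

lemma permutes_eq_id_if_burau_parity:
  assumes "3 \<le> n" and p: "p permutes {1..n}"
    and parity: "\<And>r c. r < n - 1 \<Longrightarrow> c < n - 1 \<Longrightarrow> burau_parity p r c \<longleftrightarrow> r = c"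
  shows "p = id"
proof -
  txt \<open>Each \<open>p ` {1..c+1}\<close> is an initial or a final segment. For \<open>c = 0\<close> the final segment has
    at least two elements, so \<open>p 1 = 1\<close>, and then all of them are initial.\<close>
  have img: "p ` {1..Suc c} = {1..Suc c} \<or> p ` {1..Suc c} = {Suc (Suc c)..n}" if "c < n - 1" for c
    using image_atLeastAtMost_if_burau_parity[OF p that parity] that by blast
  have "{p 1} \<noteq> {Suc (Suc 0)..n}"
  proof
    assume "{p 1} = {Suc (Suc 0)..n}"
    then have "2 \<in> {p 1}" "3 \<in> {p 1}"
      using assms(1) by simp_all
    then show False by simp
  qed
  moreover have "{p 1} = {1} \<or> {p 1} = {Suc (Suc 0)..n}"
    using img[of 0] assms(1) by simp
  ultimately have p1: "p 1 = 1"
    by simp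
  have init: "p ` {1..k} = {1..k}" if k: "k \<le> n" for k
  proof (cases "k = 0 \<or> k = n")
    case True
    then show ?thesis using permutes_image[OF p] by auto
  next
    case False
    then obtain c where c: "k = Suc c" "c < n - 1"
      using k by (cases k) auto
    have "1 \<in> p ` {1..Suc c}"
      using p1 by (metis atLeastAtMost_iff image_eqI le_add1 plus_1_eq_Suc order_refl)
    moreover have "1 \<notin> {Suc (Suc c)..n}"
      by simp
    ultimately show ?thesis
      using img[OF c(2)] c(1) by metis
  qed
  show ?thesis
  proof
    fix k
    show "p k = id k"
    proof (cases "k \<in> {1..n}")
      case True
      then have "p k \<in> p ` {1..k}"
        by simp
      then have upper: "p k \<in> {1..k}"
        using init[of k] True by simp
      have "p k \<notin> p ` {1..k - 1}"
        using True by (auto simp: inj_image_mem_iff[OF permutes_inj[OF p]])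
      moreover have "p ` {1..k - 1} = {1..k - 1}"
        using True by (intro init) auto
      ultimately have "p k \<notin> {1..k - 1}"
        by simp
      with upper show ?thesis
        by simp
    qed (use permutes_not_in[OF p] in simp)
  qed
qed

lemma cong_mat_id_mod_2: "[x = mat_id r c] (mod 2) \<longleftrightarrow> (odd x \<longleftrightarrow> r = c)" for x :: int
  by (simp add: mat_id_def cong_def even_iff_mod_2_eq_zero odd_iff_mod_2_eq_one)

lemma braid_class_mem_congruence_subgroup_2:
  assumes "3 \<le> n" and "valid_word n w"
  shows "braid_class n w \<in> congruence_subgroup n 2 \<longleftrightarrow> braid_perm w = id"
proof -
  have "braid_class n w \<in> congruence_subgroup n 2 \<longleftrightarrow>
      (\<forall>r<n - 1. \<forall>c<n - 1. burau_parity (braid_perm w) r c \<longleftrightarrow> r = c)"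
    using assms(2)
    by (simp add: braid_class_mem_congruence_subgroup congruent_id_def cong_mat_id_mod_2 odd_burau)
  also have "\<dots> \<longleftrightarrow> braid_perm w = id"
    using permutes_eq_id_if_burau_parity[OF assms(1) braid_perm_permutes[OF assms(2)]]
    by (auto simp: burau_parity_id)
  finally show ?thesis .
qed

section \<open>The permutation homomorphism on \<open>B\<^sub>n[l]\<close>\<close>

lemma valid_word_replicate: "1 \<le> i \<Longrightarrow> i \<le> n - 1 \<Longrightarrow> valid_word n (replicate k (i, b))"
  by (simp add: valid_word_def)

lemma burau_replicate:
  assumes "r < n - 1" and "1 \<le> i" and "i \<le> n - 1"
  shows "burau n (replicate k (i, True)) r c
    = mat_id r c + int k * burau_coeff n i True r * mat_id (i - 1) c"
  using assms(1)
proof (induction k arbitrary: r)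
  case (Suc k)
  have "i - 1 < n - 1" and "burau_coeff n i True (i - 1) = 0"
    using assms burau_coeff_diag[of n "i - 1"] by auto
  with Suc assms show ?case
    by (simp add: burau_Cons algebra_simps)
qed simp

lemma congruent_id_replicate:
  assumes "1 \<le> i" and "i \<le> n - 1"
  shows "congruent_id n m (burau n (replicate m (i, True)))"
  using burau_replicate[OF _ assms] by (simp add: congruent_id_def cong_def mult.assoc)

lemma subgroup_sym_group_eq_carrier:
  assumes H: "subgroup H (sym_group n)"
    and adjacent: "\<And>i. 1 \<le> i \<Longrightarrow> i < n \<Longrightarrow> Transposition.transpose i (Suc i) \<in> H"
  shows "H = carrier (sym_group n)"
proof
  show "H \<subseteq> carrier (sym_group n)"
    using H by (rule subgroup.subset)
  have one: "id \<in> H" and comp: "p \<in> H \<Longrightarrow> q \<in> H \<Longrightarrow> p \<circ> q \<in> H" for p q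
    using subgroup.one_closed[OF H] subgroup.m_closed[OF H]
    by (simp_all add: sym_group_one sym_group_mult)
  have adjacent_seq: "apply_adj_transps xs \<in> H" if "set xs \<subseteq> {1..<n}" for xs
    using that
  proof (induction xs)
    case (Cons x xs)
    then show ?case
      by (simp del: comp_apply) (intro comp adjacent; simp)
  qed (simp add: one)
  have transpose: "Transposition.transpose a b \<in> H" if "a \<in> {1..n}" "b \<in> {1..n}" for a b
  proof (cases a b rule: linorder_cases)
    case less
    then show ?thesis
      using that adjacent_seq[of "adj_transp_seq a b"]
      by (simp add: adj_transp_seq_correct set_adj_transp_seq subset_eq)
  next
    case greater
    then show ?thesis
      using that adjacent_seq[of "adj_transp_seq b a"]
      by (simp add: adj_transp_seq_correct set_adj_transp_seq subset_eq transpose_commute)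
  qed (simp add: one)
  show "carrier (sym_group n) \<subseteq> H"
  proof
    fix p assume "p \<in> carrier (sym_group n)"
    then have "p permutes {1..n}"
      by (simp add: sym_group_carrier)
    from this finite_atLeastAtMost show "p \<in> H"
    proof (induction rule: permutes_induct)
      case (swap a b p)
      then show ?case by (intro comp transpose)
    qed (rule one)
  qed
qed

definition class_perm :: "braid_word set \<Rightarrow> nat \<Rightarrow> nat" where
  "class_perm A = braid_perm (SOME w. w \<in> A)"

lemma class_perm_braid_class: "valid_word n w \<Longrightarrow> class_perm (braid_class n w) = braid_perm w"
  using braid_perm_braid_eq[OF braid_eq_some_mem_braid_class] by (simp add: class_perm_def)

lemma class_perm_hom: "class_perm \<in> hom (braid_group n) (sym_group n)"
proof (rule homI)
  fix A assume "A \<in> carrier (braid_group n)"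
  then obtain w where "valid_word n w" "A = braid_class n w"
    by (auto simp: braid_group_carrier)
  then show "class_perm A \<in> carrier (sym_group n)"
    using braid_perm_permutes[of n w] by (simp add: class_perm_braid_class sym_group_carrier)
next
  fix A B assume "A \<in> carrier (braid_group n)" "B \<in> carrier (braid_group n)"
  then obtain u v where "valid_word n u" "A = braid_class n u" "valid_word n v" "B = braid_class n v"
    by (auto simp: braid_group_carrier)
  then show "class_perm (A \<otimes>\<^bsub>braid_group n\<^esub> B) = class_perm A \<otimes>\<^bsub>sym_group n\<^esub> class_perm B"
    by (simp add: braid_group_mult class_perm_braid_class braid_perm_append sym_group_mult)
qed

lemma group_hom_class_perm:
  "group_hom ((braid_group n)\<lparr>carrier := congruence_subgroup n m\<rparr>) (sym_group n) class_perm"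
proof -
  have "class_perm \<in> hom ((braid_group n)\<lparr>carrier := congruence_subgroup n m\<rparr>) (sym_group n)"
    using class_perm_hom[of n] subgroup.subset[OF subgroup_congruence_subgroup[of n m]]
    unfolding hom_def by auto
  then show ?thesis
    using subgroup.subgroup_is_group[OF subgroup_congruence_subgroup group_braid_group]
    by (simp add: group_hom_def group_hom_axioms_def sym_group_is_group)
qed

lemma class_perm_image_congruence_subgroup:
  assumes "odd l"
  shows "class_perm ` congruence_subgroup n l = carrier (sym_group n)"
proof (rule subgroup_sym_group_eq_carrier)
  show "subgroup (class_perm ` congruence_subgroup n l) (sym_group n)"
    using class_perm_hom group_braid_group sym_group_is_group subgroup_congruence_subgroup
    by (intro group_hom.subgroup_img_is_subgroup) (auto simp: group_hom_def group_hom_axioms_def)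
next
  fix i assume i: "1 \<le> i" "i < n"
  then have "valid_word n (replicate l (i, True))"
    by (intro valid_word_replicate) auto
  moreover have "congruent_id n l (burau n (replicate l (i, True)))"
    using i by (intro congruent_id_replicate) auto
  ultimately have "braid_class n (replicate l (i, True)) \<in> congruence_subgroup n l"
    by (simp add: braid_class_mem_congruence_subgroup)
  moreover have "class_perm (braid_class n (replicate l (i, True))) = Transposition.transpose i (Suc i)"
    using assms \<open>valid_word n (replicate l (i, True))\<close>
    by (simp add: class_perm_braid_class braid_perm_replicate)
  ultimately show "Transposition.transpose i (Suc i) \<in> class_perm ` congruence_subgroup n l"
    by (metis image_eqI)
qed

lemma kernel_class_perm:
  assumes "3 \<le> n" and "odd l"
  shows "kernel ((braid_group n)\<lparr>carrier := congruence_subgroup n l\<rparr>) (sym_group n) class_perm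
    = congruence_subgroup n (2 * l)"
proof -
  have "class_perm A = id \<longleftrightarrow> A \<in> congruence_subgroup n 2" if A: "A \<in> congruence_subgroup n l" for A
  proof -
    obtain w where "valid_word n w" "A = braid_class n w"
      using A by (auto simp: congruence_subgroup_def braid_group_carrier)
    then show ?thesis
      by (simp add: class_perm_braid_class braid_class_mem_congruence_subgroup_2[OF assms(1)])
  qed
  moreover have "congruence_subgroup n (2 * l) = congruence_subgroup n 2 \<inter> congruence_subgroup n l"
    using assms(2) by (intro congruence_subgroup_mult) simp
  ultimately show ?thesis
    by (auto simp: kernel_def sym_group_one)
qed

theorem theorem3p1:
  fixes n l :: nat
  assumes "n \<ge> 3" and "l > 0" and "odd l"
  shows "((braid_group n)\<lparr>carrier := congruence_subgroup n l\<rparr>)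
           Mod (congruence_subgroup n (2 * l)) \<cong> sym_group n"
proof -
  interpret group_hom "(braid_group n)\<lparr>carrier := congruence_subgroup n l\<rparr>" "sym_group n" class_perm
    by (rule group_hom_class_perm)
  have "(braid_group n)\<lparr>carrier := congruence_subgroup n l\<rparr>
      Mod kernel ((braid_group n)\<lparr>carrier := congruence_subgroup n l\<rparr>) (sym_group n) class_perm
    \<cong> sym_group n"
    using class_perm_image_congruence_subgroup[OF assms(3)] by (intro FactGroup_iso) simp
  then show ?thesis
    by (simp add: kernel_class_perm assms(1,3))
qed

end
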